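(* Let $h_i$ be a strictly convex regularizer on $\mathcal{X}_i$ such that $\nabla h_i^*(y_i)>\mathbf{0}$ (coordinatewise) for all $y_i$. Then the map $g_i(x_i)=\nabla h_i(x_i)-[\nabla h_i(x_i)]_1\cdot\mathbf{1}$ is a bijection between the relative interior of $\mathcal{X}_i$ and $\mathcal{Y}_i=\{y_i\in\mathbb{R}^{S_i}: y_{i1}=0\}$.
   Context: $\mathcal{X}_i=\{x_i\in\mathbb{R}^{S_i}_{\ge0}:\sum_{s}x_{is}=1\}$ is the probability simplex; $\mathbf{1}$ is the all-ones vector and $[v]_1$ the first coordinate of $v$. $h_i$ is strictly convex and differentiable on the relative interior of $\mathcal{X}_i$ (gradient taken in $\mathbb{R}^{S_i}$); the learning rate is absorbed into $h_i$. Its convex conjugate is $h_i^*(y_i)=\sup_{x_i\in\mathcal{X}_i}\{\langle y_i,x_i\rangle-h_i(x_i)\}$, and $\nabla h_i^*(y_i)=\arg\max_{x_i\in\mathcal{X}_i}\{\langle y_i,x_i\rangle-h_i(x_i)\}$. *)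

theory Defs
  imports "HOL-Analysis.Analysis"
begin

definition prob_simplex :: "(real ^ 'n::finite) set" where
  "prob_simplex = {x. (\<forall>s. 0 \<le> x $ s) \<and> sum (\<lambda>s. x $ s) UNIV = 1}"

definition strictly_convex_on :: "'a::real_vector set \<Rightarrow> ('a \<Rightarrow> real) \<Rightarrow> bool" where
  "strictly_convex_on X h \<longleftrightarrow> convex X \<and>
     (\<forall>x\<in>X. \<forall>y\<in>X. \<forall>t::real. x \<noteq> y \<and> 0 < t \<and> t < 1 \<longrightarrow>
        h ((1 - t) *\<^sub>R x + t *\<^sub>R y) < (1 - t) * h x + t * h y)"

text \<open>x is the gradient of the convex conjugate h^* at y, i.e. x attains the
  maximum of <y,x> - h(x) over the simplex.\<close>
definition is_conj_grad :: "((real ^ 'n::finite) \<Rightarrow> real) \<Rightarrow> real ^ 'n \<Rightarrow> real ^ 'n \<Rightarrow> bool" where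
  "is_conj_grad h y x \<longleftrightarrow> is_arg_max (\<lambda>z. y \<bullet> z - h z) (\<lambda>z. z \<in> prob_simplex) x"

end

theory Submission
  imports Defs
begin

text \<open>Injectivity: by strict convexity the gradient is strictly monotone,
  \<open>(\<nabla>h x - \<nabla>h z) \<bullet> (x - z) > 0\<close> for \<open>x \<noteq> z\<close>; but if \<open>x\<close> and \<open>z\<close> have the same image,
  \<open>\<nabla>h x - \<nabla>h z\<close> is a multiple of \<open>\<one>\<close>, which is orthogonal to the difference of two points
  of the simplex. Surjectivity: for \<open>y\<close> with \<open>y\<^sub>1 = 0\<close>, the maximiser \<open>x = \<nabla>h\<^sup>*(y)\<close> of
  \<open>\<langle>y, x\<rangle> - h x\<close> is positive, hence interior to the simplex, so the derivative of that
  function vanishes along every direction \<open>e\<^sub>s - e\<^sub>1\<close> of the simplex; this says exactly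
  \<open>y\<^sub>s - y\<^sub>1 = (\<nabla>h x)\<^sub>s - (\<nabla>h x)\<^sub>1\<close>.\<close>

lemma has_real_derivative_gderiv_line:
  fixes h :: "'a::real_inner \<Rightarrow> real"
  assumes "GDERIV h x :> g"
  shows "((\<lambda>t. h (x + t *\<^sub>R d)) has_real_derivative g \<bullet> d) (at 0)"
proof -
  have line: "((\<lambda>t::real. x + t *\<^sub>R d) has_derivative (\<lambda>t. t *\<^sub>R d)) (at 0)"
    by (auto intro!: derivative_eq_intros)
  have "(h has_derivative (\<lambda>v. v \<bullet> g)) (at (x + 0 *\<^sub>R d))"
    using assms by (simp add: gderiv_def)
  from has_derivative_compose[OF line this]
  show ?thesis
    by (auto simp: o_def inner_commute intro: has_derivative_imp_has_field_derivative)
qed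

lemma strictly_convex_on_imp_convex_on:
  assumes "strictly_convex_on S h"
  shows "convex_on S h"
proof
  show "convex S"
    using assms by (simp add: strictly_convex_on_def)
next
  fix t :: real and x y assume "0 < t" "t < 1" "x \<in> S" "y \<in> S"
  then show "h ((1 - t) *\<^sub>R x + t *\<^sub>R y) \<le> (1 - t) * h x + t * h y"
    using assms unfolding strictly_convex_on_def
    by (cases "x = y") (auto simp: algebra_simps intro: less_imp_le)
qed

lemma convex_on_gradient_le:
  fixes h :: "'a::real_inner \<Rightarrow> real"
  assumes convex: "convex_on S h" and "x \<in> S" "z \<in> S"
    and "GDERIV h x :> g"
  shows "g \<bullet> (z - x) \<le> h z - h x"
proof -
  let ?q = "\<lambda>t. (h (x + t *\<^sub>R (z - x)) - h x) / t"
  have "((\<lambda>t. (h (x + t *\<^sub>R (z - x)) - h (x + 0 *\<^sub>R (z - x))) / (t - 0))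
          \<longlongrightarrow> g \<bullet> (z - x)) (at 0)"
    using has_real_derivative_gderiv_line[OF assms(4)] by (simp add: has_field_derivative_iff)
  then have "(?q \<longlongrightarrow> g \<bullet> (z - x)) (at_right 0)"
    by (simp add: filterlim_at_split)
  moreover have "\<forall>\<^sub>F t in at_right 0. ?q t \<le> h z - h x"
    unfolding eventually_at_right_field
  proof (intro exI[of _ 1] conjI allI impI)
    fix t :: real assume "0 < t" "t < 1"
    have "h (x + t *\<^sub>R (z - x)) = h ((1 - t) *\<^sub>R x + t *\<^sub>R z)"
      by (simp add: algebra_simps)
    also have "\<dots> \<le> (1 - t) * h x + t * h z"
      using \<open>0 < t\<close> \<open>t < 1\<close> assms(2,3) by (intro convex_onD[OF convex]) auto
    finally have "h (x + t *\<^sub>R (z - x)) - h x \<le> t * (h z - h x)"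
      by (simp add: algebra_simps)
    then show "?q t \<le> h z - h x"
      using \<open>0 < t\<close> by (simp add: divide_le_eq mult.commute)
  qed simp
  ultimately show ?thesis
    by (rule tendsto_upperbound) simp
qed

lemma strictly_convex_on_gradient_less:
  fixes h :: "'a::real_inner \<Rightarrow> real"
  assumes strict: "strictly_convex_on S h" and "x \<in> S" "z \<in> S" "x \<noteq> z"
    and "GDERIV h x :> g"
  shows "g \<bullet> (z - x) < h z - h x"
proof -
  define m where "m = (1 - 1/2) *\<^sub>R x + (1/2::real) *\<^sub>R z"
  have "m \<in> S"
    using strict assms(2,3) unfolding m_def strictly_convex_on_def by (intro convexD) auto
  have "(1/2) * (g \<bullet> (z - x)) = g \<bullet> (m - x)"
    by (simp add: m_def algebra_simps inner_diff_right)
  also have "\<dots> \<le> h m - h x"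
    by (rule convex_on_gradient_le[OF strictly_convex_on_imp_convex_on[OF strict]
          assms(2) \<open>m \<in> S\<close> assms(5)])
  also have "h m < (1 - 1/2) * h x + (1/2) * h z"
  proof -
    have "0 < (1/2::real)" "(1/2::real) < 1"
      by auto
    with strict assms(2-4) show ?thesis
      unfolding m_def strictly_convex_on_def by blast
  qed
  finally show ?thesis by simp
qed

lemma strictly_convex_on_gradient_strict_mono:
  fixes h :: "'a::real_inner \<Rightarrow> real"
  assumes strict: "strictly_convex_on S h" and "x \<in> S" "z \<in> S" "x \<noteq> z"
    and "GDERIV h x :> gx" "GDERIV h z :> gz"
  shows "0 < (gx - gz) \<bullet> (x - z)"
proof -
  have "gx \<bullet> (z - x) < h z - h x" "gz \<bullet> (x - z) < h x - h z"
    using assms by (auto intro!: strictly_convex_on_gradient_less[OF strict])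
  then show ?thesis
    by (simp add: inner_diff_left inner_diff_right algebra_simps)
qed

lemma inner_one_prob_simplex:
  "x \<in> prob_simplex \<Longrightarrow> (1::real ^ 'n::finite) \<bullet> x = 1"
  by (simp add: prob_simplex_def inner_vec_def)

lemma prob_simplex_positive_neighbourhood:
  fixes x :: "real ^ 'n::finite"
  assumes "x \<in> prob_simplex" and pos: "\<forall>s. 0 < x $ s"
  obtains e where "0 < e" "\<And>z. dist x z < e \<Longrightarrow> 1 \<bullet> z = 1 \<Longrightarrow> z \<in> prob_simplex"
proof
  let ?e = "Min (range (\<lambda>s. x $ s))"
  show "0 < ?e"
    using pos by (subst Min_gr_iff) auto
  fix z :: "real ^ 'n" assume "dist x z < ?e" and "1 \<bullet> z = 1"
  have "0 \<le> z $ s" for s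
  proof -
    have "\<bar>x $ s - z $ s\<bar> \<le> dist x z"
      using component_le_norm_cart[of "x - z" s] by (simp add: dist_norm)
    moreover have "?e \<le> x $ s"
      by (rule Min_le) auto
    ultimately show ?thesis
      using \<open>dist x z < ?e\<close> by linarith
  qed
  with \<open>1 \<bullet> z = 1\<close> show "z \<in> prob_simplex"
    by (simp add: prob_simplex_def inner_vec_def)
qed

lemma positive_in_rel_interior_prob_simplex:
  fixes x :: "real ^ 'n::finite"
  assumes "x \<in> prob_simplex" and "\<forall>s. 0 < x $ s"
  shows "x \<in> rel_interior prob_simplex"
proof -
  obtain e where "0 < e" and e: "\<And>z. dist x z < e \<Longrightarrow> 1 \<bullet> z = 1 \<Longrightarrow> z \<in> prob_simplex"
    using prob_simplex_positive_neighbourhood[OF assms] by blast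
  have "affine hull prob_simplex \<subseteq> {z. (1::real ^ 'n) \<bullet> z = 1}"
    by (intro hull_minimal affine_hyperplane) (auto simp: inner_one_prob_simplex)
  then have "ball x e \<inter> affine hull prob_simplex \<subseteq> prob_simplex"
    using e by auto
  with assms(1) \<open>0 < e\<close> show ?thesis
    by (auto simp: mem_rel_interior_ball)
qed

lemma is_conj_grad_stationary:
  fixes h :: "real ^ 'n::finite \<Rightarrow> real"
  assumes cg: "is_conj_grad h y x" and pos: "\<forall>s. 0 < x $ s"
    and "GDERIV h x :> g"
  shows "(y - g) $ s = (y - g) $ s'"
proof -
  have "x \<in> prob_simplex" and max: "\<And>z. z \<in> prob_simplex \<Longrightarrow> y \<bullet> z - h z \<le> y \<bullet> x - h x"
    using cg unfolding is_conj_grad_def is_arg_max_linorder by auto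
  obtain e where "0 < e" and e: "\<And>z. dist x z < e \<Longrightarrow> 1 \<bullet> z = 1 \<Longrightarrow> z \<in> prob_simplex"
    using prob_simplex_positive_neighbourhood[OF \<open>x \<in> prob_simplex\<close> pos] by blast
  define d :: "real ^ 'n" where "d = axis s 1 - axis s' 1"
  have "((\<lambda>t. y \<bullet> (x + t *\<^sub>R d) - h (x + t *\<^sub>R d)) has_real_derivative y \<bullet> d - g \<bullet> d) (at 0)"
    by (auto simp: inner_add_right intro!: derivative_eq_intros
        has_real_derivative_gderiv_line[OF assms(3)])
  moreover have "0 < e / (norm d + 1)"
    using \<open>0 < e\<close> by (intro divide_pos_pos) (auto intro: add_nonneg_pos)
  moreover have "y \<bullet> (x + t *\<^sub>R d) - h (x + t *\<^sub>R d) \<le> y \<bullet> (x + 0 *\<^sub>R d) - h (x + 0 *\<^sub>R d)"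
    if "\<bar>0 - t\<bar> < e / (norm d + 1)" for t
  proof -
    have "\<bar>t\<bar> * norm d \<le> \<bar>t\<bar> * (norm d + 1)"
      by (simp add: mult_left_mono)
    also have "\<dots> < e"
      using that by (simp add: pos_less_divide_eq add_nonneg_pos)
    finally have "dist x (x + t *\<^sub>R d) < e"
      by (simp add: dist_norm)
    moreover have "1 \<bullet> (x + t *\<^sub>R d) = 1"
      using \<open>x \<in> prob_simplex\<close> by (simp add: d_def inner_one_prob_simplex inner_add_right inner_diff_right inner_axis)
    ultimately show ?thesis
      using max e by simp
  qed
  ultimately have "y \<bullet> d - g \<bullet> d = 0"
    by (blast intro: DERIV_local_max)
  then show ?thesis
    by (simp add: d_def inner_diff_left inner_diff_right inner_axis algebra_simps)
qed

lemma prob_simplex_gradient_eq_mod_one_imp_eq: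
  fixes h :: "real ^ 'n::finite \<Rightarrow> real"
  assumes strict: "strictly_convex_on prob_simplex h"
    and "x \<in> prob_simplex" "z \<in> prob_simplex"
    and "GDERIV h x :> gx" "GDERIV h z :> gz"
    and "gx - gz = c *\<^sub>R 1"
  shows "x = z"
proof (rule ccontr)
  assume "x \<noteq> z"
  then have "0 < (gx - gz) \<bullet> (x - z)"
    using assms by (intro strictly_convex_on_gradient_strict_mono[OF strict])
  moreover have "(1::real ^ 'n) \<bullet> (x - z) = 0"
    using assms(2,3) by (simp add: inner_diff_right inner_one_prob_simplex)
  ultimately show False
    using assms(6) by simp
qed

theorem lemma1:
  fixes h :: "real ^ 'n::finite \<Rightarrow> real"
    and grad_h :: "real ^ 'n \<Rightarrow> real ^ 'n"
    and s1 :: 'n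
  assumes strict: "strictly_convex_on prob_simplex h"
    and grad: "\<And>x. x \<in> rel_interior prob_simplex \<Longrightarrow> GDERIV h x :> grad_h x"
    and conj_pos: "\<And>y. \<exists>x. is_conj_grad h y x \<and> (\<forall>s. 0 < x $ s)"
  shows "bij_betw (\<lambda>x. grad_h x - (grad_h x $ s1) *\<^sub>R (1::real ^ 'n))
           (rel_interior prob_simplex) {y :: real ^ 'n. y $ s1 = 0}"
proof (rule bij_betw_imageI)
  let ?g = "\<lambda>x. grad_h x - (grad_h x $ s1) *\<^sub>R (1::real ^ 'n)"
  show "inj_on ?g (rel_interior prob_simplex)"
  proof (rule inj_onI)
    fix x z assume x: "x \<in> rel_interior prob_simplex" and z: "z \<in> rel_interior prob_simplex"
      and "?g x = ?g z"
    then have "grad_h x - grad_h z = (grad_h x $ s1 - grad_h z $ s1) *\<^sub>R 1"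
      by (simp add: algebra_simps)
    with x z rel_interior_subset show "x = z"
      by (blast intro: prob_simplex_gradient_eq_mod_one_imp_eq[OF strict _ _ grad grad])
  qed
  show "?g ` rel_interior prob_simplex = {y. y $ s1 = 0}"
  proof (intro equalityI subsetI)
    fix y :: "real ^ 'n" assume "y \<in> {y. y $ s1 = 0}"
    obtain x where cg: "is_conj_grad h y x" and pos: "\<forall>s. 0 < x $ s"
      using conj_pos by blast
    have x: "x \<in> rel_interior prob_simplex"
      using cg pos positive_in_rel_interior_prob_simplex
      by (auto simp: is_conj_grad_def is_arg_max_def)
    have "(y - grad_h x) $ s = (y - grad_h x) $ s1" for s
      by (rule is_conj_grad_stationary[OF cg pos grad[OF x]])
    with \<open>y \<in> {y. y $ s1 = 0}\<close> have "y = ?g x"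
      by (simp add: vec_eq_iff algebra_simps)
    with x show "y \<in> ?g ` rel_interior prob_simplex"
      by blast
  qed auto
qed

end
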